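(* Let $n\in\mathbb N$, let $K_1,\dots,K_n$ be singular kernel functions and let $J$ be an arbitrary $n$-field function. Let $j\in\{0,1,\dots,n\}$. For every $q>0$ and every $\mathbf y\in\overline S$ with $m_j(\mathbf y)\ne-\infty$ there exist $\eta>0$ and a set $Z\subseteq I_j(\mathbf y)$ such that for every $\mathbf x\in\overline S$ with $\|\mathbf x-\mathbf y\|\le\eta$: (i) $Z\subseteq I_j(\mathbf x)$, and every point of $Z$ has distance at least $\eta$ from $\{x_1,\dots,x_n\}$; (ii) $m_j(\mathbf x)=\sup_{t\in Z}F(\mathbf x,t)$; (iii) $F(\mathbf x,t)\ge m_j(\mathbf x)-q>-\infty$ for every $t\in Z$.
   Context: A kernel function is a function $K:(-1,0)\cup(0,1)\to\mathbb R$ that is concave on $(-1,0)$ and concave on $(0,1)$ and satisfies $\lim_{t\downarrow0}K(t)=\lim_{t\uparrow0}K(t)$. It is extended to $[-1,1]$ with values in $[-\infty,\infty)$ by its one-sided limits at $-1,0,1$. A kernel function is singular if $K(0)=-\infty$. An $n$-field function is a function $J:[0,1]\to[-\infty,\infty)$ that is bounded above and whose set of finite values has total weight strictly greater than $n$. Here the points $0$ and $1$ each have weight $1/2$ and every point of $(0,1)$ has weight $1$. $\overline S=\{\mathbf y\in\mathbb R^n:0\le y_1\le\dots\le y_n\le1\}$. $F(\mathbf y,t)=J(t)+\sum_{i=1}^nK_i(t-y_i)$, with the convention $a+(-\infty)=-\infty$. Set $y_0:=0$ and $y_{n+1}:=1$. For $j=0,\dots,n$ let $I_j(\mathbf y)=[y_j,y_{j+1}]$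 and $m_j(\mathbf y)=\sup_{t\in I_j(\mathbf y)}F(\mathbf y,t)$. $\|\mathbf v\|=\max_i|v_i|$. *)

theory Defs
  imports "HOL-Analysis.Analysis"
begin

text \<open>A kernel function, given directly as its extension K :: real => ereal to [-1,1]
  (values outside [-1,1] are irrelevant).\<close>
definition kernel_function :: "(real \<Rightarrow> ereal) \<Rightarrow> bool" where
  "kernel_function K \<longleftrightarrow>
     (\<forall>t \<in> {-1<..<0} \<union> {0<..<1}. \<bar>K t\<bar> \<noteq> \<infinity>) \<and>
     concave_on {-1<..<0} (\<lambda>t. real_of_ereal (K t)) \<and>
     concave_on {0<..<1} (\<lambda>t. real_of_ereal (K t)) \<and>
     (K \<longlongrightarrow> K 0) (at_left 0) \<and>
     (K \<longlongrightarrow> K 0) (at_right 0) \<and>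
     (K \<longlongrightarrow> K (-1)) (at_right (-1)) \<and>
     (K \<longlongrightarrow> K 1) (at_left 1)"

definition singular_kernel :: "(real \<Rightarrow> ereal) \<Rightarrow> bool" where
  "singular_kernel K \<longleftrightarrow> kernel_function K \<and> K 0 = -\<infinity>"

definition pt_weight :: "real \<Rightarrow> real" where
  "pt_weight t = (if t = 0 \<or> t = 1 then 1/2 else 1)"

definition n_field_function :: "nat \<Rightarrow> (real \<Rightarrow> ereal) \<Rightarrow> bool" where
  "n_field_function n J \<longleftrightarrow>
     (\<exists>M::real. \<forall>t\<in>{0..1}. J t \<le> ereal M) \<and>
     (let D = {t\<in>{0..1}. J t \<noteq> -\<infinity>} in
        infinite D \<or> (\<Sum>t\<in>D. pt_weight t) > real n)"

text \<open>Points y in R^n are functions nat => real, only indices 1..n matter;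
  yext adds y_0 = 0 and y_(n+1) = 1.\<close>
definition yext :: "nat \<Rightarrow> (nat \<Rightarrow> real) \<Rightarrow> nat \<Rightarrow> real" where
  "yext n y i = (if i = 0 then 0 else if i = Suc n then 1 else y i)"

definition Sbar :: "nat \<Rightarrow> (nat \<Rightarrow> real) set" where
  "Sbar n = {y. \<forall>i\<le>n. yext n y i \<le> yext n y (Suc i)}"

definition Fval :: "nat \<Rightarrow> (real \<Rightarrow> ereal) \<Rightarrow> (nat \<Rightarrow> real \<Rightarrow> ereal) \<Rightarrow> (nat \<Rightarrow> real) \<Rightarrow> real \<Rightarrow> ereal" where
  "Fval n J K y t = J t + (\<Sum>i=1..n. K i (t - y i))"

definition Iint :: "nat \<Rightarrow> (nat \<Rightarrow> real) \<Rightarrow> nat \<Rightarrow> real set" where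
  "Iint n y j = {yext n y j .. yext n y (Suc j)}"

definition mval :: "nat \<Rightarrow> (real \<Rightarrow> ereal) \<Rightarrow> (nat \<Rightarrow> real \<Rightarrow> ereal) \<Rightarrow> (nat \<Rightarrow> real) \<Rightarrow> nat \<Rightarrow> ereal" where
  "mval n J K y j = (SUP t\<in>Iint n y j. Fval n J K y t)"

end

theory Submission
  imports Defs
begin

text \<open>Let \<open>m = m\<^sub>j(y)\<close> and let \<open>Z\<close> be the set of \<open>t \<in> I\<^sub>j(y)\<close> with
  \<open>F(y,t) \<ge> m - q/2\<close>. Since all terms of \<open>F\<close> are bounded above, at a point of \<open>Z\<close> every
  kernel term exceeds a fixed level \<open>L\<close>; as the kernels are singular, this keeps the point a fixed
  distance away from all \<open>y\<^sub>i\<close>. Truncated below at \<open>L\<close>, the kernels become uniformly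
  continuous real functions on \<open>[-1,1]\<close> (concavity rules out the value \<open>\<infinity>\<close> at the
  ends). Hence for \<open>x\<close> near \<open>y\<close> the values \<open>F(x,t)\<close> and \<open>F(y,t)\<close> differ by at
  most \<open>q/8\<close> wherever the kernel terms stay above \<open>L + 1\<close>, while elsewhere \<open>F(x,t)\<close> is
  far below \<open>m\<close>. So on \<open>Z\<close> the function \<open>F(x,\<cdot>)\<close> stays close to \<open>F(y,\<cdot>)\<close>, and off
  \<open>Z\<close> it lies below its value at a near-maximiser of \<open>F(y,\<cdot>)\<close> in \<open>Z\<close>.\<close>

section \<open>Concave functions and kernel functions\<close>

lemma concave_on_slope_antimono:
  fixes f :: "real \<Rightarrow> real"
  assumes "concave_on I f" "x \<in> I" "y \<in> I" "x < c" "c < y"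
  shows "(f y - f c) / (y - c) \<le> (f c - f x) / (c - x)"
proof -
  have cvx: "convex_on I (\<lambda>t. - f t)" using assms(1) by (simp add: concave_on_def)
  have "((- f x) - (- f c)) / (x - c) \<le> ((- f c) - (- f y)) / (c - y)"
    using convex_on_slope_le[OF cvx assms(2-5)] by linarith
  moreover have "((- f x) - (- f c)) / (x - c) = - ((f c - f x) / (c - x))"
    "((- f c) - (- f y)) / (c - y) = - ((f y - f c) / (y - c))"
    by (simp_all add: divide_minus_right[symmetric])
  ultimately show ?thesis by simp
qed

lemma concave_on_eventually_bounded_above_at_left:
  fixes f :: "real \<Rightarrow> real"
  assumes "concave_on {a<..<b} f" "a < b"
  shows "\<exists>M. \<forall>\<^sub>F t in at_left b. f t \<le> M"
proof -
  define x c where "x = (3*a + b) / 4" and "c = (a + b) / 2"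
  define s where "s = (f c - f x) / (c - x)"
  have "f t \<le> f c + (b - a) * \<bar>s\<bar>" if "c < t" "t < b" for t
  proof -
    have "(f t - f c) / (t - c) \<le> s"
      unfolding s_def using assms that
      by (intro concave_on_slope_antimono[of "{a<..<b}"]) (auto simp: x_def c_def)
    then have "f t - f c \<le> (t - c) * s" using that by (simp add: divide_le_eq mult.commute)
    also have "\<dots> \<le> (t - c) * \<bar>s\<bar>"
      using that by (intro mult_left_mono) auto
    also have "\<dots> \<le> (b - a) * \<bar>s\<bar>"
      using assms(2) that unfolding c_def by (intro mult_right_mono) (simp_all add: field_simps)
    finally show ?thesis by simp
  qed
  moreover have "c < b" using assms(2) by (simp add: c_def)
  ultimately show ?thesis unfolding eventually_at_left_field by blast
qed

lemma concave_on_eventually_bounded_above_at_right: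
  fixes f :: "real \<Rightarrow> real"
  assumes "concave_on {a<..<b} f" "a < b"
  shows "\<exists>M. \<forall>\<^sub>F t in at_right a. f t \<le> M"
proof -
  define c y where "c = (a + b) / 2" and "y = (a + 3*b) / 4"
  define s where "s = (f y - f c) / (y - c)"
  have "f t \<le> f c + (b - a) * \<bar>s\<bar>" if "a < t" "t < c" for t
  proof -
    have "s \<le> (f c - f t) / (c - t)"
      unfolding s_def using assms that
      by (intro concave_on_slope_antimono[of "{a<..<b}"]) (auto simp: y_def c_def)
    then have "(c - t) * s \<le> f c - f t" using that by (simp add: le_divide_eq mult.commute)
    moreover have "- ((c - t) * s) \<le> (b - a) * \<bar>s\<bar>"
    proof -
      have "- ((c - t) * s) \<le> (c - t) * \<bar>s\<bar>"
        using that mult_left_mono[of "- s" "\<bar>s\<bar>" "c - t"] by simp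
      also have "\<dots> \<le> (b - a) * \<bar>s\<bar>"
        using assms(2) that unfolding c_def by (intro mult_right_mono) (simp_all add: field_simps)
      finally show ?thesis .
    qed
    ultimately show ?thesis by simp
  qed
  moreover have "a < c" using assms(2) by (simp add: c_def)
  ultimately show ?thesis unfolding eventually_at_right_field by blast
qed

lemma kernel_function_real:
  assumes "kernel_function K" "s \<in> {-1<..<0} \<union> {0<..<1}"
  shows "K s = ereal (real_of_ereal (K s))"
  using assms unfolding kernel_function_def by (simp add: ereal_real')

lemma kernel_function_tendsto_interior:
  assumes K: "kernel_function K" and s: "s \<in> {-1<..<0} \<union> {0<..<1}"
  shows "(K \<longlongrightarrow> K s) (at s)"
proof -
  obtain S where S: "S = {-1<..<0} \<or> S = {0<..<1}" "s \<in> S" using s by blast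
  let ?f = "\<lambda>t. real_of_ereal (K t)"
  have "open S" using S(1) by auto
  have "convex_on S (\<lambda>t. - ?f t)"
    using K S(1) unfolding kernel_function_def concave_on_def by auto
  then have "continuous_on S (\<lambda>t. - (- ?f t))"
    by (intro continuous_on_minus convex_on_continuous \<open>open S\<close>)
  then have "(?f \<longlongrightarrow> ?f s) (at s)"
    using \<open>open S\<close> S(2) by (simp add: continuous_on_eq_continuous_at isCont_def)
  then have "((\<lambda>t. ereal (?f t)) \<longlongrightarrow> K s) (at s)"
    using kernel_function_real[OF K s] by (metis tendsto_ereal)
  then show ?thesis
    by (rule Lim_transform_within_open[OF _ \<open>open S\<close> S(2)])
      (use kernel_function_real[OF K] S(1) in auto)
qed

lemma kernel_function_continuous_on:
  assumes K: "kernel_function K"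
  shows "continuous_on {-1..1} K"
  unfolding continuous_on_def
proof
  fix s :: real assume "s \<in> {-1..1}"
  then consider "s = -1" | "s = 1" | "s = 0" | "s \<in> {-1<..<0} \<union> {0<..<1}" by force
  then show "(K \<longlongrightarrow> K s) (at s within {-1..1})"
  proof cases
    case 3
    then show ?thesis using K unfolding kernel_function_def
      by (simp add: at_within_Icc_at filterlim_split_at)
  next
    case 4
    then show ?thesis using kernel_function_tendsto_interior[OF K] tendsto_within_subset by blast
  qed (use K in \<open>simp_all add: kernel_function_def at_within_Icc_at_right at_within_Icc_at_left\<close>)
qed

lemma kernel_function_not_PInf:
  assumes K: "kernel_function K" and s: "s \<in> {-1..1}"
  shows "K s \<noteq> \<infinity>"
proof -
  let ?f = "\<lambda>t. real_of_ereal (K t)"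
  have conc: "concave_on {-1<..<0} ?f" "concave_on {0<..<1} ?f"
    using K unfolding kernel_function_def by auto
  have lim_not_PInf: "l \<noteq> \<infinity>"
    if lim: "(K \<longlongrightarrow> l) F" "F \<noteq> bot" and ev: "\<forall>\<^sub>F t in F. t \<in> {-1<..<0} \<union> {0<..<1}"
      and bdd: "\<exists>M. \<forall>\<^sub>F t in F. ?f t \<le> M" for l F
  proof -
    obtain M where "\<forall>\<^sub>F t in F. ?f t \<le> M" using bdd by blast
    with ev have "\<forall>\<^sub>F t in F. K t \<le> ereal M"
      by eventually_elim (metis kernel_function_real[OF K] ereal_less_eq(3))
    then have "l \<le> ereal M" using tendsto_upperbound lim by blast
    then show ?thesis by auto
  qed
  consider "s = -1" | "s = 1" | "s = 0" | "s \<in> {-1<..<0} \<union> {0<..<1}" using s by force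
  then show ?thesis
  proof cases
    case 1
    have "\<forall>\<^sub>F t::real in at_right (-1). t \<in> {-1<..<0} \<union> {0<..<1}"
      by (rule eventually_mono[OF eventually_at_right_real[of "-1::real" 0]]) auto
    then show ?thesis unfolding 1
      using K concave_on_eventually_bounded_above_at_right[OF conc(1)]
      by (intro lim_not_PInf) (auto simp: kernel_function_def)
  next
    case 2
    have "\<forall>\<^sub>F t::real in at_left 1. t \<in> {-1<..<0} \<union> {0<..<1}"
      by (rule eventually_mono[OF eventually_at_left_real[of "0::real" 1]]) auto
    then show ?thesis unfolding 2
      using K concave_on_eventually_bounded_above_at_left[OF conc(2)]
      by (intro lim_not_PInf) (auto simp: kernel_function_def)
  next
    case 3
    have "\<forall>\<^sub>F t::real in at_right 0. t \<in> {-1<..<0} \<union> {0<..<1}"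
      by (rule eventually_mono[OF eventually_at_right_real[of "0::real" 1]]) auto
    then show ?thesis unfolding 3
      using K concave_on_eventually_bounded_above_at_right[OF conc(2)]
      by (intro lim_not_PInf) (auto simp: kernel_function_def)
  next
    case 4
    then show ?thesis using kernel_function_real[OF K] by (metis PInfty_neq_ereal(1))
  qed
qed

lemma kernel_function_bounded_above:
  assumes K: "kernel_function K"
  shows "\<exists>U. \<forall>s\<in>{-1..1}. K s \<le> ereal U"
proof -
  obtain s0 where s0: "s0 \<in> {-1..1}" "\<And>s. s \<in> {-1..1} \<Longrightarrow> K s \<le> K s0"
    using continuous_attains_sup[of "{-1..1}" K] kernel_function_continuous_on[OF K] by auto
  have "K s0 \<le> ereal (real_of_ereal (K s0))"
    using kernel_function_not_PInf[OF K s0(1)] by (cases "K s0") auto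
  then show ?thesis using s0(2) order_trans by blast
qed

lemma singular_kernel_below_near_zero:
  assumes "singular_kernel K"
  shows "\<exists>\<delta>>0. \<forall>s. \<bar>s\<bar> < \<delta> \<longrightarrow> K s < ereal L"
proof -
  have K: "kernel_function K" and K0: "K 0 = -\<infinity>"
    using assms unfolding singular_kernel_def by auto
  have "(K \<longlongrightarrow> -\<infinity>) (at 0)"
    using K K0 unfolding kernel_function_def by (simp add: filterlim_split_at)
  then have "\<forall>\<^sub>F s in at 0. K s < ereal L" by (simp add: order_tendstoD(2))
  then obtain \<delta> where \<delta>: "\<delta> > 0" "\<And>s. s \<noteq> 0 \<Longrightarrow> \<bar>s\<bar> < \<delta> \<Longrightarrow> K s < ereal L"
    unfolding eventually_at dist_real_def by auto
  show ?thesis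
  proof (intro exI[of _ \<delta>] conjI allI impI)
    fix s :: real assume "\<bar>s\<bar> < \<delta>"
    then show "K s < ereal L" using \<delta> K0 by (cases "s = 0") auto
  qed (rule \<delta>(1))
qed

section \<open>Truncation from below\<close>

definition clip_below :: "real \<Rightarrow> ereal \<Rightarrow> real" where
  "clip_below L v = real_of_ereal (max v (ereal L))"

lemma ereal_clip_below: "v \<noteq> \<infinity> \<Longrightarrow> ereal (clip_below L v) = max v (ereal L)"
  by (cases v) (auto simp: clip_below_def max_def)

lemma clip_below_eq_self: "ereal L < v \<Longrightarrow> v \<noteq> \<infinity> \<Longrightarrow> v = ereal (clip_below L v)"
  by (simp add: ereal_clip_below max_absorb1)

lemma greater_if_clip_below_greater:
  assumes "v \<noteq> \<infinity>" "L < clip_below L v"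
  shows "ereal L < v"
proof -
  have "ereal L < max v (ereal L)" using assms by (simp add: ereal_clip_below[symmetric])
  then show ?thesis by (simp add: less_max_iff_disj)
qed

lemma kernel_function_clip_below_uniformly_continuous:
  assumes K: "kernel_function K" and "e > 0"
  shows "\<exists>d>0. \<forall>a\<in>{-1..1}. \<forall>b\<in>{-1..1}. \<bar>a - b\<bar> < d \<longrightarrow>
           \<bar>clip_below L (K a) - clip_below L (K b)\<bar> < e"
proof -
  let ?h = "\<lambda>s. clip_below L (K s)"
  have "continuous_on {-1..1} ?h"
    unfolding continuous_on_def
  proof
    fix s :: real assume s: "s \<in> {-1..1}"
    have "(K \<longlongrightarrow> K s) (at s within {-1..1})"
      using kernel_function_continuous_on[OF K] s unfolding continuous_on_def by blast
    then have "((\<lambda>t. max (K t) (ereal L)) \<longlongrightarrow> max (K s) (ereal L)) (at s within {-1..1})"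
      by (intro tendsto_max tendsto_const)
    then have "((\<lambda>t. max (K t) (ereal L)) \<longlongrightarrow> ereal (?h s)) (at s within {-1..1})"
      using kernel_function_not_PInf[OF K s] by (simp add: ereal_clip_below)
    then show "(?h \<longlongrightarrow> ?h s) (at s within {-1..1})"
      unfolding clip_below_def by (rule lim_real_of_ereal)
  qed
  then have "uniformly_continuous_on {-1..1} ?h"
    by (intro compact_uniformly_continuous) auto
  then obtain d where "d > 0"
    and d: "\<forall>a\<in>{-1..1}. \<forall>b\<in>{-1..1}. dist b a < d \<longrightarrow> dist (?h b) (?h a) < e"
    using \<open>e > 0\<close> unfolding uniformly_continuous_on_def by blast
  show ?thesis
    by (intro exI[of _ d] conjI ballI impI \<open>d > 0\<close>) (use d in \<open>auto simp: dist_real_def\<close>)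
qed

lemma finite_ball_ex_pos_uniform:
  assumes "finite I"
    and ex: "\<And>i. i \<in> I \<Longrightarrow> \<exists>d>0. P i d"
    and mono: "\<And>i d d'. i \<in> I \<Longrightarrow> P i d \<Longrightarrow> 0 < d' \<Longrightarrow> d' \<le> d \<Longrightarrow> P i d'"
  shows "\<exists>d>(0::real). \<forall>i\<in>I. P i d"
proof -
  have "\<forall>i\<in>I. \<forall>\<^sub>F d in at_right 0. P i d"
  proof
    fix i assume "i \<in> I"
    with ex obtain d where "d > 0" "P i d" by blast
    then show "\<forall>\<^sub>F d in at_right 0. P i d"
      unfolding eventually_at_right_field using mono[OF \<open>i \<in> I\<close>] less_imp_le by blast
  qed
  then have "\<forall>\<^sub>F d in at_right 0. \<forall>i\<in>I. P i d"
    by (rule eventually_ball_finite[OF \<open>finite I\<close>])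
  then have "\<forall>\<^sub>F d in at_right 0. 0 < d \<and> (\<forall>i\<in>I. P i d)"
    by (intro eventually_conj eventually_at_right_less)
  then show ?thesis
    using eventually_happens'[OF trivial_limit_at_right_real] by blast
qed

lemma sum_clip_below_stable:
  fixes a b :: "'i \<Rightarrow> ereal" and e :: real
  assumes "e \<le> 1"
    and a: "\<forall>i\<in>I. a i \<noteq> \<infinity>" and b: "\<forall>i\<in>I. ereal (L + 1) < b i \<and> b i \<noteq> \<infinity>"
    and close: "\<forall>i\<in>I. \<bar>clip_below L (a i) - clip_below L (b i)\<bar> < e"
  shows "\<forall>i\<in>I. ereal L < a i"
    and "\<exists>ra rb. sum a I = ereal ra \<and> sum b I = ereal rb \<and> \<bar>ra - rb\<bar> \<le> real (card I) * e"
proof -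
  have b_eq: "b i = ereal (clip_below L (b i))" if "i \<in> I" for i
    using b that by (intro clip_below_eq_self) (auto intro: less_trans[rotated])
  show a_gt: "\<forall>i\<in>I. ereal L < a i"
  proof
    fix i assume i: "i \<in> I"
    have "ereal (L + 1) < b i" using b i by blast
    then have "L + 1 < clip_below L (b i)" by (subst (asm) b_eq[OF i]) simp
    with close i \<open>e \<le> 1\<close> have "L < clip_below L (a i)" by (auto simp: abs_less_iff)
    with a i show "ereal L < a i" by (intro greater_if_clip_below_greater) auto
  qed
  have "sum a I = (\<Sum>i\<in>I. ereal (clip_below L (a i)))"
    using a a_gt by (intro sum.cong) (auto intro: clip_below_eq_self)
  moreover have "sum b I = (\<Sum>i\<in>I. ereal (clip_below L (b i)))"
    using b_eq by (intro sum.cong) auto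
  moreover have "\<bar>(\<Sum>i\<in>I. clip_below L (a i)) - (\<Sum>i\<in>I. clip_below L (b i))\<bar> \<le> real (card I) * e"
  proof -
    have "\<bar>(\<Sum>i\<in>I. clip_below L (a i)) - (\<Sum>i\<in>I. clip_below L (b i))\<bar>
        \<le> (\<Sum>i\<in>I. \<bar>clip_below L (a i) - clip_below L (b i)\<bar>)"
      by (metis (no_types) sum_abs sum_subtractf)
    also have "\<dots> \<le> (\<Sum>i\<in>I. e)" using close by (intro sum_mono) auto
    finally show ?thesis by simp
  qed
  ultimately show "\<exists>ra rb. sum a I = ereal ra \<and> sum b I = ereal rb \<and> \<bar>ra - rb\<bar> \<le> real (card I) * e"
    by simp
qed

lemma Sbar_yext_mono:
  assumes y: "y \<in> Sbar n" and "a \<le> b" "b \<le> Suc n"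
  shows "yext n y a \<le> yext n y b"
  using \<open>a \<le> b\<close> \<open>b \<le> Suc n\<close>
proof (induction b rule: dec_induct)
  case (step k)
  then have "yext n y k \<le> yext n y (Suc k)" using y unfolding Sbar_def by auto
  with step show ?case by simp
qed simp

lemma Sbar_component_bounds:
  assumes "y \<in> Sbar n" "i \<in> {1..n}"
  shows "0 \<le> y i" "y i \<le> 1"
  using Sbar_yext_mono[OF assms(1), of 0 i] Sbar_yext_mono[OF assms(1), of i "Suc n"] assms(2)
  by (simp_all add: yext_def)

lemma Iint_subset_unit:
  assumes "y \<in> Sbar n" "j \<le> n"
  shows "Iint n y j \<subseteq> {0..1}"
  using Sbar_yext_mono[OF assms(1), of 0 j] Sbar_yext_mono[OF assms(1), of "Suc j" "Suc n"] assms(2)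
  by (auto simp: Iint_def yext_def)

lemma Iint_perturb:
  assumes "j \<le> n" "t \<in> Iint n y j"
    and "\<forall>i\<in>{1..n}. \<bar>x i - y i\<bar> \<le> \<delta>" "\<forall>i\<in>{1..n}. \<delta> \<le> \<bar>t - y i\<bar>"
  shows "t \<in> Iint n x j"
proof -
  have "yext n x j \<le> t"
  proof (cases "j = 0")
    case False
    then have j: "j \<in> {1..n}" using assms(1) by auto
    have "y j \<le> t" using assms(1,2) False by (simp add: Iint_def yext_def)
    then show ?thesis
      using assms(1) False bspec[OF assms(3) j] bspec[OF assms(4) j] by (auto simp: yext_def abs_le_iff)
  qed (use assms in \<open>simp add: Iint_def yext_def\<close>)
  moreover have "t \<le> yext n x (Suc j)"
  proof (cases "j = n")
    case False
    then have j: "Suc j \<in> {1..n}" using assms(1) by auto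
    have "t \<le> y (Suc j)" using assms(2) False by (simp add: Iint_def yext_def)
    then show ?thesis
      using assms(1) False bspec[OF assms(3) j] bspec[OF assms(4) j] by (auto simp: yext_def abs_le_iff)
  qed (use assms in \<open>simp add: Iint_def yext_def\<close>)
  ultimately show ?thesis by (simp add: Iint_def)
qed


section \<open>Localization of the interval maximum\<close>

locale singular_field =
  fixes n :: nat and K :: "nat \<Rightarrow> real \<Rightarrow> ereal" and J :: "real \<Rightarrow> ereal"
  assumes singular: "\<And>i. i \<in> {1..n} \<Longrightarrow> singular_kernel (K i)"
    and J_bounded_above: "\<exists>M. \<forall>t\<in>{0..1}. J t \<le> ereal M"
begin

lemma kernel_function_component: "i \<in> {1..n} \<Longrightarrow> kernel_function (K i)"
  using singular unfolding singular_kernel_def by blast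

lemma kernel_argument_bounds:
  assumes "x \<in> Sbar n" "i \<in> {1..n}" "t \<in> {0..1}"
  shows "t - x i \<in> {-1..1}"
  using Sbar_component_bounds[OF assms(1,2)] assms(3) by auto

lemma kernel_value_not_PInf:
  assumes "x \<in> Sbar n" "i \<in> {1..n}" "t \<in> {0..1}"
  shows "K i (t - x i) \<noteq> \<infinity>"
  using kernel_function_component[OF assms(2)] kernel_argument_bounds[OF assms]
  by (rule kernel_function_not_PInf)

lemma Fval_bounded_above:
  obtains C where
    "\<And>x t. x \<in> Sbar n \<Longrightarrow> (t::real) \<in> {0..1} \<Longrightarrow> Fval n J K x t \<le> ereal C"
    "\<And>x t i. x \<in> Sbar n \<Longrightarrow> (t::real) \<in> {0..1} \<Longrightarrow> i \<in> {1..n} \<Longrightarrow>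
       Fval n J K x t \<le> ereal C + K i (t - x i)"
proof -
  obtain M where M: "\<And>t. t \<in> {0..1} \<Longrightarrow> J t \<le> ereal M" using J_bounded_above by blast
  have "\<forall>i\<in>{1..n}. \<exists>u\<ge>0. \<forall>s\<in>{-1..1}. K i s \<le> ereal u"
    using kernel_function_bounded_above kernel_function_component
    by (metis ereal_less_eq(3) max.cobounded1 max.cobounded2 order_trans)
  then obtain U where U0: "\<And>i. i \<in> {1..n} \<Longrightarrow> 0 \<le> U i"
    and U: "\<And>i s. i \<in> {1..n} \<Longrightarrow> s \<in> {-1..1} \<Longrightarrow> K i s \<le> ereal (U i)"
    by metis
  define C where "C = M + (\<Sum>i=1..n. U i)"
  have U_arg: "K i (t - x i) \<le> ereal (U i)" if "x \<in> Sbar n" "t \<in> {0..1}" "i \<in> {1..n}" for x t i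
    using U kernel_argument_bounds that by blast
  show ?thesis
  proof
    fix x and t :: real assume x: "x \<in> Sbar n" and t: "t \<in> {0..1}"
    have "(\<Sum>i=1..n. K i (t - x i)) \<le> (\<Sum>i=1..n. ereal (U i))"
      by (intro sum_mono U_arg[OF x t]) auto
    then have "(\<Sum>i=1..n. K i (t - x i)) \<le> ereal (\<Sum>i=1..n. U i)" by simp
    then have "J t + (\<Sum>i=1..n. K i (t - x i)) \<le> ereal M + ereal (\<Sum>i=1..n. U i)"
      by (rule add_mono[OF M[OF t]])
    then show "Fval n J K x t \<le> ereal C" by (simp add: Fval_def C_def)
  next
    fix x i and t :: real assume x: "x \<in> Sbar n" and t: "t \<in> {0..1}" and i: "i \<in> {1..n}"
    have "(\<Sum>k\<in>{1..n}-{i}. K k (t - x k)) \<le> (\<Sum>k\<in>{1..n}-{i}. ereal (U k))"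
      by (intro sum_mono U_arg[OF x t]) auto
    also have "\<dots> \<le> ereal (\<Sum>k=1..n. U k)"
      using sum_mono2[of "{1..n}" "{1..n} - {i}" U] U0 by simp
    finally have sum_le: "(\<Sum>k=1..n. K k (t - x k)) \<le> K i (t - x i) + ereal (\<Sum>k=1..n. U k)"
      using i by (simp add: sum.remove add_left_mono)
    have "Fval n J K x t = J t + (\<Sum>k=1..n. K k (t - x k))" by (simp add: Fval_def)
    also have "\<dots> \<le> ereal M + (K i (t - x i) + ereal (\<Sum>k=1..n. U k))"
      by (rule add_mono[OF M[OF t] sum_le])
    also have "\<dots> = ereal C + K i (t - x i)"
      unfolding C_def plus_ereal.simps(1)[symmetric] by (simp only: ac_simps)
    finally show "Fval n J K x t \<le> ereal C + K i (t - x i)" .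
  qed
qed


lemma kernels_below_near_poles: "\<exists>\<delta>>0. \<forall>i\<in>{1..n}. \<forall>s. \<bar>s\<bar> < \<delta> \<longrightarrow> K i s < ereal L"
  by (rule finite_ball_ex_pos_uniform) (use singular singular_kernel_below_near_zero in auto)

lemma Fval_stable:
  assumes "0 < \<epsilon>"
  shows "\<exists>d>0. \<forall>x\<in>Sbar n. \<forall>z\<in>Sbar n. (\<forall>i\<in>{1..n}. \<bar>x i - z i\<bar> < d) \<longrightarrow>
           (\<forall>t\<in>{0..1}. (\<forall>i\<in>{1..n}. ereal (L + 1) < K i (t - z i)) \<longrightarrow>
              (\<forall>i\<in>{1..n}. ereal L < K i (t - x i)) \<and>
              Fval n J K x t \<le> Fval n J K z t + ereal \<epsilon> \<and>
              Fval n J K z t \<le> Fval n J K x t + ereal \<epsilon>)"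
proof -
  define e where "e = min 1 (\<epsilon> / (real n + 1))"
  have e: "0 < e" "e \<le> 1" "real n * e \<le> \<epsilon>"
  proof -
    show "0 < e" "e \<le> 1" using assms by (auto simp: e_def)
    have "e \<le> \<epsilon> / (real n + 1)" by (simp add: e_def)
    then have "e * (real n + 1) \<le> \<epsilon>" using pos_le_divide_eq[of "real n + 1" e \<epsilon>] by simp
    then have "real n * e + e \<le> \<epsilon>" by (simp add: distrib_left mult.commute)
    then show "real n * e \<le> \<epsilon>" using \<open>0 < e\<close> by linarith
  qed
  have "\<exists>d>0. \<forall>i\<in>{1..n}. \<forall>a\<in>{-1..1}. \<forall>b\<in>{-1..1}. \<bar>a - b\<bar> < d \<longrightarrow>
      \<bar>clip_below L (K i a) - clip_below L (K i b)\<bar> < e"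
    by (rule finite_ball_ex_pos_uniform)
      (use kernel_function_clip_below_uniformly_continuous[OF kernel_function_component \<open>0 < e\<close>] in auto)
  then obtain d where "0 < d" and d: "\<forall>i\<in>{1..n}. \<forall>a\<in>{-1..1}. \<forall>b\<in>{-1..1}. \<bar>a - b\<bar> < d \<longrightarrow>
      \<bar>clip_below L (K i a) - clip_below L (K i b)\<bar> < e"
    by blast
  show ?thesis
  proof (intro exI[of _ d] conjI[OF \<open>0 < d\<close>] ballI impI)
    fix x z t
    assume x: "x \<in> Sbar n" and z: "z \<in> Sbar n" and close: "\<forall>i\<in>{1..n}. \<bar>x i - z i\<bar> < d"
      and t: "t \<in> {0..1}" and high: "\<forall>i\<in>{1..n}. ereal (L + 1) < K i (t - z i)"
    have "\<forall>i\<in>{1..n}. \<bar>clip_below L (K i (t - x i)) - clip_below L (K i (t - z i))\<bar> < e"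
    proof
      fix i assume i: "i \<in> {1..n}"
      have "\<bar>(t - x i) - (t - z i)\<bar> < d" using close i by (simp add: abs_minus_commute)
      then show "\<bar>clip_below L (K i (t - x i)) - clip_below L (K i (t - z i))\<bar> < e"
        using d i kernel_argument_bounds[OF x i t] kernel_argument_bounds[OF z i t] by blast
    qed
    with sum_clip_below_stable[where I="{1..n}" and e=e and L=L
        and a="\<lambda>i. K i (t - x i)" and b="\<lambda>i. K i (t - z i)"]
    obtain ra rb where gt: "\<forall>i\<in>{1..n}. ereal L < K i (t - x i)"
      and sums: "(\<Sum>i=1..n. K i (t - x i)) = ereal ra" "(\<Sum>i=1..n. K i (t - z i)) = ereal rb"
      and "\<bar>ra - rb\<bar> \<le> real n * e"
      using e high kernel_value_not_PInf[OF x _ t] kernel_value_not_PInf[OF z _ t] by auto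
    then have "ra \<le> rb + \<epsilon>" "rb \<le> ra + \<epsilon>" using e(3) by auto
    moreover have "J t + ereal a \<le> J t + ereal b + ereal \<epsilon>" if "a \<le> b + \<epsilon>" for a b
      using add_left_mono[of "ereal a" "ereal (b + \<epsilon>)" "J t"] that by (simp add: add.assoc)
    ultimately show "(\<forall>i\<in>{1..n}. ereal L < K i (t - x i)) \<and>
        Fval n J K x t \<le> Fval n J K z t + ereal \<epsilon> \<and> Fval n J K z t \<le> Fval n J K x t + ereal \<epsilon>"
      using gt sums by (simp add: Fval_def)
  qed
qed

end

lemma SUP_eq_SUP_subset_if_dominated:
  fixes f :: "'a \<Rightarrow> 'b::complete_lattice"
  assumes "Z \<subseteq> A" "t0 \<in> Z" "\<And>t. t \<in> A \<Longrightarrow> t \<notin> Z \<Longrightarrow> f t \<le> f t0"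
  shows "(SUP t\<in>A. f t) = (SUP t\<in>Z. f t)"
proof (rule antisym)
  show "(SUP t\<in>A. f t) \<le> (SUP t\<in>Z. f t)"
  proof (rule SUP_least)
    fix t assume "t \<in> A"
    then show "f t \<le> (SUP t\<in>Z. f t)"
      using assms(2,3) by (cases "t \<in> Z") (auto intro: SUP_upper2)
  qed
  show "(SUP t\<in>Z. f t) \<le> (SUP t\<in>A. f t)" using assms(1) by (rule SUP_subset_mono) simp
qed

locale localization_estimates =
  fixes n :: nat and K :: "nat \<Rightarrow> real \<Rightarrow> ereal" and J :: "real \<Rightarrow> ereal"
    and j :: nat and y :: "nat \<Rightarrow> real" and q m L \<eta> :: real
  assumes j_le: "j \<le> n" and q_pos: "0 < q" and y_Sbar: "y \<in> Sbar n"
    and m_eq: "mval n J K y j = ereal m" and \<eta>_pos: "0 < \<eta>"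
    and low_kernel_low_value: "\<And>x t i. x \<in> Sbar n \<Longrightarrow> t \<in> {0..1} \<Longrightarrow> i \<in> {1..n} \<Longrightarrow>
      K i (t - x i) \<le> ereal (L + 1) \<Longrightarrow> Fval n J K x t \<le> ereal (m - q)"
    and away_from_poles: "\<And>i s. i \<in> {1..n} \<Longrightarrow> ereal L < K i s \<Longrightarrow> \<eta> \<le> \<bar>s\<bar>"
    and value_stable: "\<And>x z t. x \<in> Sbar n \<Longrightarrow> z \<in> Sbar n \<Longrightarrow> \<forall>i\<in>{1..n}. \<bar>x i - z i\<bar> \<le> \<eta> \<Longrightarrow>
      t \<in> {0..1} \<Longrightarrow> \<forall>i\<in>{1..n}. ereal (L + 1) < K i (t - z i) \<Longrightarrow>
      (\<forall>i\<in>{1..n}. ereal L < K i (t - x i)) \<and>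
      Fval n J K x t \<le> Fval n J K z t + ereal (q / 8) \<and>
      Fval n J K z t \<le> Fval n J K x t + ereal (q / 8)"
begin

text \<open>The set \<open>near_max\<close> is the set \<open>Z\<close> of the statement.\<close>

definition near_max :: "real set" where
  "near_max = {t \<in> Iint n y j. ereal (m - q / 2) \<le> Fval n J K y t}"

definition close :: "(nat \<Rightarrow> real) \<Rightarrow> bool" where
  "close x \<longleftrightarrow> x \<in> Sbar n \<and> (\<forall>i\<in>{1..n}. \<bar>x i - y i\<bar> \<le> \<eta>)"

lemma near_max_subset: "near_max \<subseteq> Iint n y j"
  by (auto simp: near_max_def)

lemma Iint_y_in_unit: "t \<in> Iint n y j \<Longrightarrow> t \<in> {0..1}"
  using Iint_subset_unit[OF y_Sbar j_le] by blast

lemma Fval_y_le_max_value: "t \<in> Iint n y j \<Longrightarrow> Fval n J K y t \<le> ereal m"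
  using m_eq unfolding mval_def by (metis SUP_upper)

lemma high_kernel_away_from_pole:
  assumes "i \<in> {1..n}" "ereal (L + 1) < K i s"
  shows "\<eta> \<le> \<bar>s\<bar>"
proof (rule away_from_poles[OF assms(1)])
  show "ereal L < K i s" using assms(2) by (rule less_trans[rotated]) simp
qed

lemma near_max_kernels_high:
  assumes "t \<in> near_max" "i \<in> {1..n}"
  shows "ereal (L + 1) < K i (t - y i)"
proof (rule ccontr)
  assume "\<not> ereal (L + 1) < K i (t - y i)"
  then have "Fval n J K y t \<le> ereal (m - q)"
    using assms near_max_subset Iint_y_in_unit by (intro low_kernel_low_value[OF y_Sbar]) auto
  moreover have "ereal (m - q / 2) \<le> Fval n J K y t" using assms(1) by (simp add: near_max_def)
  ultimately have "ereal (m - q / 2) \<le> ereal (m - q)" by (rule order_trans[rotated])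
  with q_pos show False by simp
qed

lemma near_max_stable:
  assumes t: "t \<in> near_max" and x: "close x"
  shows "t \<in> Iint n x j" "\<forall>i\<in>{1..n}. \<eta> \<le> \<bar>t - x i\<bar>"
    and "ereal (m - 5 * q / 8) \<le> Fval n J K x t" "Fval n J K x t \<le> ereal (m + q / 8)"
proof -
  have tI: "t \<in> Iint n y j" using t near_max_subset by blast
  have high: "\<forall>i\<in>{1..n}. ereal (L + 1) < K i (t - y i)" using near_max_kernels_high[OF t] by blast
  have "\<forall>i\<in>{1..n}. \<eta> \<le> \<bar>t - y i\<bar>"
    using high high_kernel_away_from_pole by blast
  then show "t \<in> Iint n x j" using x by (intro Iint_perturb[OF j_le tI]) (auto simp: close_def)
  from x have stable: "(\<forall>i\<in>{1..n}. ereal L < K i (t - x i)) \<and>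
      Fval n J K x t \<le> Fval n J K y t + ereal (q / 8) \<and> Fval n J K y t \<le> Fval n J K x t + ereal (q / 8)"
    using high Iint_y_in_unit[OF tI] by (intro value_stable[OF _ y_Sbar]) (auto simp: close_def)
  then show "\<forall>i\<in>{1..n}. \<eta> \<le> \<bar>t - x i\<bar>" using away_from_poles by blast
  have "ereal (m - q / 2) \<le> Fval n J K x t + ereal (q / 8)"
    using t stable by (auto simp: near_max_def intro: order_trans)
  then show "ereal (m - 5 * q / 8) \<le> Fval n J K x t" by (cases "Fval n J K x t") auto
  have "Fval n J K x t \<le> ereal m + ereal (q / 8)"
    using stable Fval_y_le_max_value[OF tI] by (meson add_right_mono order_trans)
  then show "Fval n J K x t \<le> ereal (m + q / 8)" by simp
qed

lemma near_max_contains_almost_maximizer: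
  "\<exists>t0\<in>near_max. \<forall>x. close x \<longrightarrow> ereal (m - q / 4) \<le> Fval n J K x t0"
proof -
  have "ereal (m - q / 8) < (SUP t\<in>Iint n y j. Fval n J K y t)"
    using m_eq q_pos unfolding mval_def by simp
  then obtain t0 where t0I: "t0 \<in> Iint n y j" and t0: "ereal (m - q / 8) < Fval n J K y t0"
    unfolding less_SUP_iff by blast
  have "t0 \<in> near_max"
    using t0I t0 q_pos by (auto simp: near_max_def intro: order_trans[OF _ less_imp_le[OF t0]])
  moreover have "ereal (m - q / 4) \<le> Fval n J K x t0" if "close x" for x
  proof -
    have "Fval n J K y t0 \<le> Fval n J K x t0 + ereal (q / 8)"
      using that near_max_kernels_high[OF \<open>t0 \<in> near_max\<close>] Iint_y_in_unit[OF t0I]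
      by (intro conjunct2[OF conjunct2[OF value_stable[OF _ y_Sbar]]]) (auto simp: close_def)
    with t0 have "ereal (m - q / 8) \<le> Fval n J K x t0 + ereal (q / 8)" by simp
    then show ?thesis by (cases "Fval n J K x t0") auto
  qed
  ultimately show ?thesis by blast
qed

lemma off_near_max_low:
  assumes x: "close x" and tI: "t \<in> Iint n x j" and t: "t \<notin> near_max"
  shows "Fval n J K x t \<le> ereal (m - q / 4)"
proof -
  have xS: "x \<in> Sbar n" using x by (simp add: close_def)
  have t01: "t \<in> {0..1}" using Iint_subset_unit[OF xS j_le] tI by blast
  show ?thesis
  proof (cases "\<exists>i\<in>{1..n}. K i (t - x i) \<le> ereal (L + 1)")
    case True
    then have "Fval n J K x t \<le> ereal (m - q)" using low_kernel_low_value[OF xS t01] by blast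
    with q_pos show ?thesis by (auto intro: order_trans)
  next
    case False
    then have high: "\<forall>i\<in>{1..n}. ereal (L + 1) < K i (t - x i)" by (auto simp: not_le)
    have "\<forall>i\<in>{1..n}. \<eta> \<le> \<bar>t - x i\<bar>"
      using high high_kernel_away_from_pole by blast
    then have "t \<in> Iint n y j"
      using x by (intro Iint_perturb[OF j_le tI]) (auto simp: close_def abs_minus_commute)
    with t have "Fval n J K y t < ereal (m - q / 2)" by (auto simp: near_max_def)
    moreover have "Fval n J K x t \<le> Fval n J K y t + ereal (q / 8)"
      using x high t01 by (intro conjunct2[OF conjunct2[OF value_stable[OF y_Sbar]]])
        (auto simp: close_def abs_minus_commute)
    ultimately have "Fval n J K x t \<le> ereal (m - q / 2) + ereal (q / 8)"
      by (meson add_right_mono less_imp_le order_trans)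
    with q_pos show ?thesis by (auto intro: order_trans)
  qed
qed


lemma mval_close_eq_SUP_near_max:
  assumes x: "close x"
  shows "mval n J K x j = (SUP t\<in>near_max. Fval n J K x t)"
proof -
  obtain t0 where t0: "t0 \<in> near_max" "ereal (m - q / 4) \<le> Fval n J K x t0"
    using near_max_contains_almost_maximizer x by blast
  have "near_max \<subseteq> Iint n x j" using near_max_stable(1)[OF _ x] by blast
  then show ?thesis
    unfolding mval_def using t0(1)
  proof (rule SUP_eq_SUP_subset_if_dominated)
    show "Fval n J K x t \<le> Fval n J K x t0" if "t \<in> Iint n x j" "t \<notin> near_max" for t
      using off_near_max_low[OF x that] t0(2) by (rule order_trans)
  qed
qed

lemma mval_close_bounds:
  assumes x: "close x"
  shows "ereal (m - q / 4) \<le> mval n J K x j" "mval n J K x j \<le> ereal (m + q / 8)"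
proof -
  show "ereal (m - q / 4) \<le> mval n J K x j"
    unfolding mval_close_eq_SUP_near_max[OF x]
    using near_max_contains_almost_maximizer x by (blast intro: SUP_upper2)
  show "mval n J K x j \<le> ereal (m + q / 8)"
    unfolding mval_close_eq_SUP_near_max[OF x]
    using near_max_stable(4)[OF _ x] by (rule SUP_least)
qed

lemma localization:
  "near_max \<subseteq> Iint n y j \<and>
   (\<forall>x\<in>Sbar n. (\<forall>i\<in>{1..n}. \<bar>x i - y i\<bar> \<le> \<eta>) \<longrightarrow>
      near_max \<subseteq> Iint n x j \<and>
      (\<forall>z\<in>near_max. \<forall>i\<in>{1..n}. \<bar>z - x i\<bar> \<ge> \<eta>) \<and>
      mval n J K x j = (SUP t\<in>near_max. Fval n J K x t) \<and>
      (\<forall>t\<in>near_max. Fval n J K x t \<ge> mval n J K x j - ereal q \<and>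
              mval n J K x j - ereal q > -\<infinity>))"
proof (intro conjI[OF near_max_subset] ballI impI)
  fix x assume "x \<in> Sbar n" "\<forall>i\<in>{1..n}. \<bar>x i - y i\<bar> \<le> \<eta>"
  then have x: "close x" by (simp add: close_def)
  obtain mx where mx: "mval n J K x j = ereal mx" "mx \<le> m + q / 8"
    using mval_close_bounds[OF x] by (cases "mval n J K x j") auto
  have "mval n J K x j - ereal q \<le> Fval n J K x t" if "t \<in> near_max" for t
  proof -
    have "ereal (mx - q) \<le> ereal (m - 5 * q / 8)" using mx(2) q_pos by simp
    also have "\<dots> \<le> Fval n J K x t" using near_max_stable(3)[OF that x] .
    finally show ?thesis using mx(1) by simp
  qed
  moreover have "mval n J K x j - ereal q > -\<infinity>" using mx(1) by simp
  moreover have "near_max \<subseteq> Iint n x j" using near_max_stable(1)[OF _ x] by blast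
  moreover have "\<forall>z\<in>near_max. \<forall>i\<in>{1..n}. \<bar>z - x i\<bar> \<ge> \<eta>" using near_max_stable(2)[OF _ x] by blast
  ultimately show "near_max \<subseteq> Iint n x j \<and>
      (\<forall>z\<in>near_max. \<forall>i\<in>{1..n}. \<bar>z - x i\<bar> \<ge> \<eta>) \<and>
      mval n J K x j = (SUP t\<in>near_max. Fval n J K x t) \<and>
      (\<forall>t\<in>near_max. Fval n J K x t \<ge> mval n J K x j - ereal q \<and>
              mval n J K x j - ereal q > -\<infinity>)"
    using mval_close_eq_SUP_near_max[OF x] by blast
qed

end

lemma (in singular_field) mval_not_PInf:
  assumes "j \<le> n" "y \<in> Sbar n"
  shows "mval n J K y j \<noteq> \<infinity>"
proof -
  obtain C where C: "\<And>x t. x \<in> Sbar n \<Longrightarrow> t \<in> {0..1} \<Longrightarrow> Fval n J K x t \<le> ereal C"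
    and "\<And>x t i. x \<in> Sbar n \<Longrightarrow> t \<in> {0..1} \<Longrightarrow> i \<in> {1..n} \<Longrightarrow>
      Fval n J K x t \<le> ereal C + K i (t - x i)"
    using Fval_bounded_above by blast
  have "mval n J K y j \<le> ereal C"
    unfolding mval_def using C[OF assms(2)] Iint_subset_unit[OF assms(2,1)] by (meson SUP_least subsetD)
  then show ?thesis by auto
qed

lemma (in singular_field) localization_estimates_exist:
  assumes j: "j \<le> n" and q: "0 < q" and y: "y \<in> Sbar n" and finite: "mval n J K y j \<noteq> -\<infinity>"
  shows "\<exists>m L \<eta>. localization_estimates n K J j y q m L \<eta>"
proof -
  obtain m where m: "mval n J K y j = ereal m"
    using finite mval_not_PInf[OF j y] by (cases "mval n J K y j") auto
  obtain C where "\<And>x t. x \<in> Sbar n \<Longrightarrow> t \<in> {0..1} \<Longrightarrow> Fval n J K x t \<le> ereal C"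
    and C_kernel: "\<And>x t i. x \<in> Sbar n \<Longrightarrow> t \<in> {0..1} \<Longrightarrow> i \<in> {1..n} \<Longrightarrow>
      Fval n J K x t \<le> ereal C + K i (t - x i)"
    using Fval_bounded_above by blast
  define L where "L = m - q - C - 1"
  obtain \<delta> where "0 < \<delta>" and \<delta>: "\<forall>i\<in>{1..n}. \<forall>s. \<bar>s\<bar> < \<delta> \<longrightarrow> K i s < ereal L"
    using kernels_below_near_poles by blast
  obtain d where "0 < d" and d: "\<forall>x\<in>Sbar n. \<forall>z\<in>Sbar n. (\<forall>i\<in>{1..n}. \<bar>x i - z i\<bar> < d) \<longrightarrow>
      (\<forall>t\<in>{0..1}. (\<forall>i\<in>{1..n}. ereal (L + 1) < K i (t - z i)) \<longrightarrow>
         (\<forall>i\<in>{1..n}. ereal L < K i (t - x i)) \<and>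
         Fval n J K x t \<le> Fval n J K z t + ereal (q / 8) \<and>
         Fval n J K z t \<le> Fval n J K x t + ereal (q / 8))"
    using Fval_stable[of "q / 8" L] q by auto
  define \<eta> where "\<eta> = min \<delta> (d / 2)"
  have "localization_estimates n K J j y q m L \<eta>"
  proof (unfold_locales)
    show "j \<le> n" "0 < q" "y \<in> Sbar n" "mval n J K y j = ereal m" by fact+
    show "0 < \<eta>" using \<open>0 < \<delta>\<close> \<open>0 < d\<close> by (simp add: \<eta>_def)
  next
    fix x t i assume "x \<in> Sbar n" "t \<in> {0..1}" "i \<in> {1..n}" "K i (t - x i) \<le> ereal (L + 1)"
    then have "Fval n J K x t \<le> ereal C + ereal (L + 1)"
      using C_kernel by (meson add_left_mono order_trans)
    then show "Fval n J K x t \<le> ereal (m - q)" by (simp add: L_def)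
  next
    fix i s assume i: "i \<in> {1..n}" and high: "ereal L < K i s"
    show "\<eta> \<le> \<bar>s\<bar>"
    proof (rule ccontr)
      assume "\<not> \<eta> \<le> \<bar>s\<bar>"
      then have "\<bar>s\<bar> < \<delta>" by (simp add: \<eta>_def)
      then have "K i s < ereal L" using \<delta> i by blast
      with high show False by simp
    qed
  next
    fix x z t assume "x \<in> Sbar n" "z \<in> Sbar n" "\<forall>i\<in>{1..n}. \<bar>x i - z i\<bar> \<le> \<eta>" "t \<in> {0..1}"
      "\<forall>i\<in>{1..n}. ereal (L + 1) < K i (t - z i)"
    moreover have "\<eta> < d" using \<open>0 < d\<close> by (simp add: \<eta>_def)
    ultimately have "\<forall>i\<in>{1..n}. \<bar>x i - z i\<bar> < d" by (auto intro: le_less_trans)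
    with d \<open>x \<in> Sbar n\<close> \<open>z \<in> Sbar n\<close> \<open>t \<in> {0..1}\<close> \<open>\<forall>i\<in>{1..n}. ereal (L + 1) < K i (t - z i)\<close>
    show "(\<forall>i\<in>{1..n}. ereal L < K i (t - x i)) \<and>
        Fval n J K x t \<le> Fval n J K z t + ereal (q / 8) \<and>
        Fval n J K z t \<le> Fval n J K x t + ereal (q / 8)"
      by blast
  qed
  then show ?thesis by blast
qed

theorem lemma3p4:
  fixes n :: nat and K :: "nat \<Rightarrow> real \<Rightarrow> ereal" and J :: "real \<Rightarrow> ereal"
    and j :: nat and q :: real and y :: "nat \<Rightarrow> real"
  assumes "\<forall>i\<in>{1..n}. singular_kernel (K i)"
    and "n_field_function n J"
    and "j \<le> n"
    and "q > 0"
    and "y \<in> Sbar n"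
    and "mval n J K y j \<noteq> -\<infinity>"
  shows "\<exists>\<eta>>0. \<exists>Z. Z \<subseteq> Iint n y j \<and>
           (\<forall>x\<in>Sbar n. (\<forall>i\<in>{1..n}. \<bar>x i - y i\<bar> \<le> \<eta>) \<longrightarrow>
              Z \<subseteq> Iint n x j \<and>
              (\<forall>z\<in>Z. \<forall>i\<in>{1..n}. \<bar>z - x i\<bar> \<ge> \<eta>) \<and>
              mval n J K x j = (SUP t\<in>Z. Fval n J K x t) \<and>
              (\<forall>t\<in>Z. Fval n J K x t \<ge> mval n J K x j - ereal q \<and>
                      mval n J K x j - ereal q > -\<infinity>))"
proof -
  interpret singular_field n K J
    using assms(1,2) by unfold_locales (auto simp: n_field_function_def)
  obtain m L \<eta> where "localization_estimates n K J j y q m L \<eta>"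
    using localization_estimates_exist assms(3-6) by blast
  then interpret localization_estimates n K J j y q m L \<eta> .
  show ?thesis using \<eta>_pos localization by blast
qed

end
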